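(* Let $A$ be a finite alphabet and let $\mathbf{w},\mathbf{w}'$ be infinite LSP words over $A$ such that $\mathbf{w}=f(\mathbf{w}')$ for a bLSP morphism $f$ on $A$. Let $q$ be the state $({\rm alph}(\mathbf{w}),f,F(\mathbf{w}))$ and let $q'$ be a state $({\rm alph}(\mathbf{w}'),g,F(\mathbf{w}'))$ where $g$ is any bLSP morphism on $A$ such that $\mathbf{w}'=g(\mathbf{w}'')$ for some infinite word $\mathbf{w}''$, and where $F(\mathbf{x})$ denotes the set of all 5-tuples $(a,b,c,\beta,\gamma)$ such that $\mathbf{x}$ has an $(a,b,c,\beta,\gamma)$-fragility. Then $(q,f,q')$ is a transition of the automaton ${\cal A}_{\rm bLSP}$.
   Context: A finite word $u$ is a left special factor of a word $w$ if there are distinct letters $x\neq y$ with $xu$ and $yu$ factors of $w$. A word is LSP if every left special factor of it is a prefix of it. A bLSP morphism on $A$ is an endomorphism $f$ of $A^*$ such that there is a letter $\alpha$ with $f(\alpha)=\alpha$ and, for every letter $\beta\neq\alpha$, there is a letter $\gamma$ with $f(\beta)=f(\gamma)\beta$; this $\alpha$ is unique and denoted ${\rm first}(f)$. For pairwise distinct letters $a,b,c$ and distinct letters $\beta\neq\gamma$, a finite word $u$ is an $(a,b,c,\beta,\gamma)$-fragility of an infinite word $\mathbf{x}$ if $ua$ is a prefix of $\mathbf{x}$ and $\beta ub$, $\gamma uc$ are factors of $\mathbf{x}$; $\mathbf{x}$ is $(a,b,c)$-fragile if it has an $(a,b,c,\beta,\gamma)$-fragility for some $\beta\neq\gamma$.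 A morphism $f$ is LSP $(a,b,c)$-breaking if for every $(a,b,c)$-fragile infinite LSP word $\mathbf{x}$, $f(\mathbf{x})$ is not LSP. ${\rm Fact}(X)$ is the set of factors of words in $X$, ${\rm pref}(w)$ the set of prefixes of $w$, ${\rm alph}(w)$ the set of letters of $w$. The automaton ${\cal A}_{\rm bLSP}$: states are triples $q=({\rm alph}(q),{\rm bLSP}(q),{\rm set}(q))$ with ${\rm alph}(q)\subseteq A$, ${\rm bLSP}(q)$ a bLSP morphism on $A$, ${\rm set}(q)\subseteq A^5$; input letters are bLSP morphisms on $A$. A triple $(q,f,q')$ is a transition iff: (1) $f={\rm bLSP}(q)$; (2) ${\rm alph}(q)={\rm alph}(f({\rm alph}(q')))$; (3) for every $(a,b,c,\beta,\gamma)\in{\rm set}(q')$, $f$ is not LSP $(a,b,c)$-breaking; (4) ${\rm set}(q)$ is exactly the set of 5-tuples $(a,b,c,\beta,\gamma)$ of letters of ${\rm alph}(q)$ with $a,b,c$ pairwise distinct, $\beta\neq\gamma$, and such that either (a) $a={\rm first}(f)$ and $\beta b,\gamma c\in{\rm Fact}(f({\rm alph}(q')))$, or (b) there exist letters $a',b',c'$ with $(a',b',c',\beta,\gamma)\in{\rm set}(q')$ and a word $x$ with $xa\in{\rm pref}(f(a')\alpha)$, $xb\in{\rm pref}(f(b')\alpha)$, $xc\in{\rm pref}(f(c')\alpha)$, where $\alpha={\rm first}(f)$. *)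

theory Defs
  imports Main
begin

text \<open>The alphabet A is the finite type 'a. Finite words are lists, infinite
words are functions nat \<Rightarrow> 'a, morphisms are maps 'a \<Rightarrow> 'a list.\<close>

definition inf_pref :: "nat \<Rightarrow> (nat \<Rightarrow> 'a) \<Rightarrow> 'a list" where
  "inf_pref n x = map x [0..<n]"

definition is_prefix_inf :: "'a list \<Rightarrow> (nat \<Rightarrow> 'a) \<Rightarrow> bool" where
  "is_prefix_inf u x \<longleftrightarrow> u = inf_pref (length u) x"

definition is_factor_inf :: "'a list \<Rightarrow> (nat \<Rightarrow> 'a) \<Rightarrow> bool" where
  "is_factor_inf u x \<longleftrightarrow> (\<exists>i. u = map x [i..<i + length u])"

definition left_special :: "'a list \<Rightarrow> (nat \<Rightarrow> 'a) \<Rightarrow> bool" where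
  "left_special u x \<longleftrightarrow>
     (\<exists>c d. c \<noteq> d \<and> is_factor_inf (c # u) x \<and> is_factor_inf (d # u) x)"

definition LSP :: "(nat \<Rightarrow> 'a) \<Rightarrow> bool" where
  "LSP x \<longleftrightarrow> (\<forall>u. left_special u x \<longrightarrow> is_prefix_inf u x)"

definition morph :: "('a \<Rightarrow> 'a list) \<Rightarrow> 'a list \<Rightarrow> 'a list" where
  "morph f u = concat (map f u)"

text \<open>Image of an infinite word under a non-erasing morphism (all bLSP morphisms
are non-erasing): the n-th letter of f(x) is the n-th letter of f(x_0...x_n).\<close>
definition morph_inf :: "('a \<Rightarrow> 'a list) \<Rightarrow> (nat \<Rightarrow> 'a) \<Rightarrow> (nat \<Rightarrow> 'a)" where
  "morph_inf f x = (\<lambda>n. morph f (inf_pref (Suc n) x) ! n)"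

definition bLSP_with :: "('a \<Rightarrow> 'a list) \<Rightarrow> 'a \<Rightarrow> bool" where
  "bLSP_with f \<alpha> \<longleftrightarrow> f \<alpha> = [\<alpha>] \<and> (\<forall>\<beta>. \<beta> \<noteq> \<alpha> \<longrightarrow> (\<exists>\<gamma>. f \<beta> = f \<gamma> @ [\<beta>]))"

definition is_bLSP :: "('a \<Rightarrow> 'a list) \<Rightarrow> bool" where
  "is_bLSP f \<longleftrightarrow> (\<exists>\<alpha>. bLSP_with f \<alpha>)"

definition first :: "('a \<Rightarrow> 'a list) \<Rightarrow> 'a" where
  "first f = (THE \<alpha>. bLSP_with f \<alpha>)"

definition Fact :: "'a list set \<Rightarrow> 'a list set" where
  "Fact X = {u. \<exists>w\<in>X. \<exists>p s. w = p @ u @ s}"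

definition pref :: "'a list \<Rightarrow> 'a list set" where
  "pref w = {u. \<exists>s. w = u @ s}"

definition is_fragility ::
  "'a list \<Rightarrow> 'a \<Rightarrow> 'a \<Rightarrow> 'a \<Rightarrow> 'a \<Rightarrow> 'a \<Rightarrow> (nat \<Rightarrow> 'a) \<Rightarrow> bool" where
  "is_fragility u a b c \<beta> \<gamma> x \<longleftrightarrow>
     a \<noteq> b \<and> a \<noteq> c \<and> b \<noteq> c \<and> \<beta> \<noteq> \<gamma> \<and>
     is_prefix_inf (u @ [a]) x \<and>
     is_factor_inf (\<beta> # u @ [b]) x \<and> is_factor_inf (\<gamma> # u @ [c]) x"

definition fragile :: "'a \<Rightarrow> 'a \<Rightarrow> 'a \<Rightarrow> (nat \<Rightarrow> 'a) \<Rightarrow> bool" where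
  "fragile a b c x \<longleftrightarrow> (\<exists>\<beta> \<gamma> u. \<beta> \<noteq> \<gamma> \<and> is_fragility u a b c \<beta> \<gamma> x)"

definition Frag :: "(nat \<Rightarrow> 'a) \<Rightarrow> ('a \<times> 'a \<times> 'a \<times> 'a \<times> 'a) set" where
  "Frag x = {(a, b, c, \<beta>, \<gamma>). \<exists>u. is_fragility u a b c \<beta> \<gamma> x}"

definition LSP_breaking :: "('a \<Rightarrow> 'a list) \<Rightarrow> 'a \<Rightarrow> 'a \<Rightarrow> 'a \<Rightarrow> bool" where
  "LSP_breaking f a b c \<longleftrightarrow>
     (\<forall>x :: nat \<Rightarrow> 'a. fragile a b c x \<and> LSP x \<longrightarrow> \<not> LSP (morph_inf f x))"

type_synonym 'a state = "'a set \<times> ('a \<Rightarrow> 'a list) \<times> ('a \<times> 'a \<times> 'a \<times> 'a \<times> 'a) set"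

definition st_alph :: "'a state \<Rightarrow> 'a set" where "st_alph q = fst q"
definition st_bLSP :: "'a state \<Rightarrow> ('a \<Rightarrow> 'a list)" where "st_bLSP q = fst (snd q)"
definition st_set :: "'a state \<Rightarrow> ('a \<times> 'a \<times> 'a \<times> 'a \<times> 'a) set" where "st_set q = snd (snd q)"

definition is_state :: "'a state \<Rightarrow> bool" where
  "is_state q \<longleftrightarrow> is_bLSP (st_bLSP q)"

definition alph_img :: "('a \<Rightarrow> 'a list) \<Rightarrow> 'a set \<Rightarrow> 'a set" where
  "alph_img f B = (\<Union>b\<in>B. set (f b))"

definition transition :: "'a state \<Rightarrow> ('a \<Rightarrow> 'a list) \<Rightarrow> 'a state \<Rightarrow> bool" where
  "transition q f q' \<longleftrightarrow>
     is_state q \<and> is_state q' \<and> is_bLSP f \<and>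
     f = st_bLSP q \<and>
     st_alph q = alph_img f (st_alph q') \<and>
     (\<forall>(a, b, c, \<beta>, \<gamma>) \<in> st_set q'. \<not> LSP_breaking f a b c) \<and>
     st_set q = {(a, b, c, \<beta>, \<gamma>).
        a \<in> st_alph q \<and> b \<in> st_alph q \<and> c \<in> st_alph q \<and>
        \<beta> \<in> st_alph q \<and> \<gamma> \<in> st_alph q \<and>
        a \<noteq> b \<and> a \<noteq> c \<and> b \<noteq> c \<and> \<beta> \<noteq> \<gamma> \<and>
        ((a = first f \<and> [\<beta>, b] \<in> Fact (f ` st_alph q') \<and> [\<gamma>, c] \<in> Fact (f ` st_alph q')) \<or>
         (\<exists>a' b' c' x. (a', b', c', \<beta>, \<gamma>) \<in> st_set q' \<and>
            x @ [a] \<in> pref (f a' @ [first f]) \<and>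
            x @ [b] \<in> pref (f b' @ [first f]) \<and>
            x @ [c] \<in> pref (f c' @ [first f])))}"

end

(*
  A bLSP morphism f with first f = \<alpha> maps every letter to a word that starts with \<alpha> and
  contains no other \<alpha>. So in f(x) the occurrences of \<alpha> mark exactly the starts of the
  images of the letters of x; in particular f is injective on finite words. An occurrence
  of a word u in f(x) that starts with \<alpha> therefore desubstitutes uniquely as
  u = f(v) \<alpha> z, where \<alpha> z is the part of u from its last \<alpha> on: v occurs in x at the
  corresponding position and \<alpha> z, followed by the next letter of f(x), is a prefix of
  f(d) \<alpha> for the letter d of x following that occurrence of v. Applied to the three
  occurrences in a fragility of f(x) with u nonempty, this yields a fragility of x with the
  same \<beta>, \<gamma>, and conversely fragilities of x map to fragilities of f(x). For u empty the
  fragility amounts to two-letter factors inside the images of letters. This computes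
  F(f(x)) as required by condition (4); condition (3) holds because f maps the fragile LSP
  word w' to the LSP word w.
*)

theory Submission
  imports Defs
begin

section \<open>Occurrences\<close>

definition occurs_at :: "'a list \<Rightarrow> (nat \<Rightarrow> 'a) \<Rightarrow> nat \<Rightarrow> bool" where
  "occurs_at v x i \<longleftrightarrow> map x [i..<i + length v] = v"

lemma occurs_at_Nil [simp]: "occurs_at [] x i"
  by (simp add: occurs_at_def)

lemma occurs_at_Cons [simp]: "occurs_at (a # v) x i \<longleftrightarrow> x i = a \<and> occurs_at v x (Suc i)"
  unfolding occurs_at_def by (simp add: upt_conv_Cons del: upt_Suc)

lemma occurs_at_append [simp]:
  "occurs_at (u @ v) x i \<longleftrightarrow> occurs_at u x i \<and> occurs_at v x (i + length u)"
  by (induction u arbitrary: i) auto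

lemma occurs_at_map_upt: "occurs_at (map x [i..<j]) x i"
  by (cases "i \<le> j") (simp_all add: occurs_at_def)

lemma is_prefix_inf_iff_occurs_at: "is_prefix_inf v x \<longleftrightarrow> occurs_at v x 0"
  unfolding is_prefix_inf_def inf_pref_def occurs_at_def by (metis add_0)

lemma is_factor_inf_iff_occurs_at: "is_factor_inf v x \<longleftrightarrow> (\<exists>i. occurs_at v x i)"
  unfolding is_factor_inf_def occurs_at_def by metis

lemma occurs_at_pref: "occurs_at v x i \<Longrightarrow> u \<in> pref v \<Longrightarrow> occurs_at u x i"
  by (auto simp: pref_def)

lemma pref_nth: "u \<in> pref w \<Longrightarrow> n < length u \<Longrightarrow> u ! n = w ! n"
  by (auto simp: pref_def nth_append)

lemma take_mem_pref: "take n w \<in> pref w"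
  unfolding pref_def by (rule CollectI, rule exI[of _ "drop n w"]) simp

lemma pref_snoc_unique: "u @ [a] \<in> pref w \<Longrightarrow> u @ [b] \<in> pref w \<Longrightarrow> a = b"
  by (auto simp: pref_def)

lemma occurs_at_same_length:
  "occurs_at u x i \<Longrightarrow> occurs_at v x i \<Longrightarrow> length u = length v \<Longrightarrow> u = v"
  unfolding occurs_at_def by metis

lemma occurs_at_same_pos_pref:
  assumes "occurs_at u x i" "occurs_at v x i" "length u \<le> length v"
  shows "u \<in> pref v"
proof -
  have pref: "take (length u) v \<in> pref v"
    by (rule take_mem_pref)
  with assms(2) have "occurs_at (take (length u) v) x i"
    by (rule occurs_at_pref)
  with assms(1,3) have "take (length u) v = u"
    by (intro occurs_at_same_length) auto
  with pref show ?thesis by simp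
qed

lemma set_subset_range_if_occurs_at: "occurs_at v x i \<Longrightarrow> set v \<subseteq> range x"
  unfolding occurs_at_def by (metis image_mono set_map subset_UNIV)

lemma last_occurrence_unique:
  assumes eq: "p @ a # s = q @ a # t" and "a \<notin> set s" "a \<notin> set t"
  shows "p = q \<and> s = t"
proof -
  have no_shorter: "\<not> length p < length q"
    if "p @ a # s = q @ a # t" "a \<notin> set s" for p q s t
  proof
    assume lt: "length p < length q"
    have "a # s = drop (length p) q @ a # t"
      using arg_cong[OF that(1), of "drop (length p)"] lt by simp
    with lt obtain r where "s = r @ a # t"
      by (cases "drop (length p) q") auto
    with that(2) show False by simp
  qed
  from no_shorter[OF eq assms(2)] no_shorter[OF eq[symmetric] assms(3)]
  have "length p = length q"
    by linarith
  with eq show ?thesis by simp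
qed

section \<open>Images under morphisms\<close>

lemma morph_Nil [simp]: "morph f [] = []"
  by (simp add: morph_def)

lemma morph_Cons [simp]: "morph f (a # v) = f a @ morph f v"
  by (simp add: morph_def)

lemma morph_append [simp]: "morph f (u @ v) = morph f u @ morph f v"
  by (simp add: morph_def)

definition image_pos :: "('a \<Rightarrow> 'a list) \<Rightarrow> (nat \<Rightarrow> 'a) \<Rightarrow> nat \<Rightarrow> nat" where
  "image_pos f x k = length (morph f (inf_pref k x))"

lemma inf_pref_add: "inf_pref (k + n) x = inf_pref k x @ map x [k..<k + n]"
  by (simp add: inf_pref_def upt_add_eq_append[of 0 k n])

lemma image_pos_0 [simp]: "image_pos f x 0 = 0"
  by (simp add: image_pos_def inf_pref_def)

lemma image_pos_Suc: "image_pos f x (Suc k) = image_pos f x k + length (f (x k))"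
  by (simp add: image_pos_def inf_pref_def)

lemma image_pos_add:
  "occurs_at v x k \<Longrightarrow> image_pos f x (k + length v) = image_pos f x k + length (morph f v)"
  by (simp add: image_pos_def inf_pref_add occurs_at_def)

section \<open>bLSP morphisms\<close>

locale bLSP_morphism =
  fixes f :: "'a \<Rightarrow> 'a list" and \<alpha> :: 'a
  assumes bLSP_with: "bLSP_with f \<alpha>"
begin

lemma image_eq_Cons: "\<exists>s. f d = \<alpha> # s \<and> \<alpha> \<notin> set s"
proof (induction "length (f d)" arbitrary: d rule: less_induct)
  case less
  show ?case
  proof (cases "d = \<alpha>")
    case True
    with bLSP_with show ?thesis by (simp add: bLSP_with_def)
  next
    case False
    with bLSP_with obtain e where fd: "f d = f e @ [d]"
      by (auto simp: bLSP_with_def)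
    then have "length (f e) < length (f d)" by simp
    with less obtain s where "f e = \<alpha> # s" "\<alpha> \<notin> set s" by blast
    with fd False show ?thesis by auto
  qed
qed

lemma image_ConsE:
  obtains s where "f d = \<alpha> # s" "\<alpha> \<notin> set s"
  using image_eq_Cons by blast

lemma image_not_Nil: "f d \<noteq> []"
  using image_eq_Cons[of d] by auto

lemma hd_image: "hd (f d) = \<alpha>"
  using image_eq_Cons[of d] by auto

lemma last_image: "last (f d) = d"
proof (cases "d = \<alpha>")
  case True
  with bLSP_with show ?thesis by (simp add: bLSP_with_def)
next
  case False
  with bLSP_with obtain e where "f d = f e @ [d]"
    by (auto simp: bLSP_with_def)
  then show ?thesis by simp
qed

lemma first_eq: "first f = \<alpha>"
  unfolding first_def
proof (rule the_equality)
  show "bLSP_with f \<alpha>" by (rule bLSP_with)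
next
  fix a
  assume "bLSP_with f a"
  then have "f a = [a]" by (simp add: bLSP_with_def)
  with hd_image[of a] show "a = \<alpha>" by simp
qed

lemma image_neq_append_first: "f b \<noteq> f a @ \<alpha> # s"
proof
  assume eq: "f b = f a @ \<alpha> # s"
  obtain r where "f a = \<alpha> # r" using image_ConsE by blast
  moreover obtain t where "f b = \<alpha> # t" "\<alpha> \<notin> set t" using image_ConsE by blast
  ultimately show False using eq by auto
qed

lemma morph_eq_Nil_iff: "morph f v = [] \<longleftrightarrow> v = []"
  by (cases v) (simp_all add: image_not_Nil)

lemma hd_morph: "v \<noteq> [] \<Longrightarrow> hd (morph f v) = \<alpha>"
  by (cases v) (simp_all add: image_not_Nil hd_image)

lemma length_le_length_morph: "length v \<le> length (morph f v)"
proof (induction v)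
  case (Cons a v)
  have "1 \<le> length (f a)" using image_not_Nil[of a] by (simp add: Suc_leI)
  with Cons.IH show ?case by simp
qed simp

text \<open>\<open>f a\<close> may be a proper prefix of \<open>f b\<close>, but there it is never followed by \<open>\<alpha>\<close>,
  whereas the image of a nonempty word starts with \<open>\<alpha>\<close>.\<close>
lemma image_append_morph_cancel:
  assumes "f a @ morph f v = f b @ morph f w"
  shows "f a = f b"
proof -
  have no_overhang: "r = []" if "f c = f d @ r" "r @ s = morph f u" for c d r s u
  proof (rule ccontr)
    assume "r \<noteq> []"
    then obtain y r' where r: "r = y # r'" by (cases r) auto
    with that(2) have mu: "morph f u = y # r' @ s" by simp
    then have "u \<noteq> []" by (cases u) auto
    with mu have "y = \<alpha>" using hd_morph[of u] by simp
    with that(1) r show False using image_neq_append_first by simp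
  qed
  from assms obtain r where
    "(f a = f b @ r \<and> r @ morph f v = morph f w) \<or> (f a @ r = f b \<and> morph f v = r @ morph f w)"
    by (auto simp: append_eq_append_conv2)
  then show ?thesis
    using no_overhang by (metis append.right_neutral)
qed

lemma inj_morph: "inj (morph f)"
proof (rule injI)
  show "morph f v = morph f w \<Longrightarrow> v = w" for v w
  proof (induction v arbitrary: w)
    case Nil
    then show ?case by (metis morph_eq_Nil_iff)
  next
    case (Cons a v)
    obtain b w' where w: "w = b # w'"
      using Cons.prems by (cases w) (simp_all add: image_not_Nil)
    with Cons.prems have eq: "f a @ morph f v = f b @ morph f w'" by simp
    then have "f a = f b" by (rule image_append_morph_cancel)
    moreover from this have "a = b" by (metis last_image)
    ultimately show ?case using eq w Cons.IH by simp
  qed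
qed

lemma strict_mono_image_pos: "strict_mono (image_pos f x)"
  by (rule strict_mono_Suc_iff[THEN iffD2]) (simp add: image_pos_Suc image_not_Nil)

lemma morph_inf_pref_mem_pref:
  "m \<le> n \<Longrightarrow> morph f (inf_pref m x) \<in> pref (morph f (inf_pref n x))"
  using inf_pref_add[of m "n - m" x] by (simp add: pref_def)

lemma occurs_at_morph_inf_pref: "occurs_at (morph f (inf_pref m x)) (morph_inf f x) 0"
  unfolding occurs_at_def
proof (rule nth_equalityI)
  fix n
  assume "n < length (map (morph_inf f x) [0..<0 + length (morph f (inf_pref m x))])"
  then have n: "n < length (morph f (inf_pref m x))" by simp
  have "n < length (morph f (inf_pref (Suc n) x))"
    using length_le_length_morph[of "inf_pref (Suc n) x"] by (simp add: inf_pref_def)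
  moreover have "morph f (inf_pref m x) \<in> pref (morph f (inf_pref (max m (Suc n)) x))"
    and "morph f (inf_pref (Suc n) x) \<in> pref (morph f (inf_pref (max m (Suc n)) x))"
    by (simp_all add: morph_inf_pref_mem_pref)
  ultimately have "morph f (inf_pref (Suc n) x) ! n = morph f (inf_pref m x) ! n"
    using n by (simp add: pref_nth)
  with n show "map (morph_inf f x) [0..<0 + length (morph f (inf_pref m x))] ! n =
      morph f (inf_pref m x) ! n"
    by (simp add: morph_inf_def)
qed simp

lemma occurs_at_morph_inf:
  assumes "occurs_at v x k"
  shows "occurs_at (morph f v @ [\<alpha>]) (morph_inf f x) (image_pos f x k)"
proof -
  have "inf_pref (k + length v + 1) x = inf_pref k x @ v @ [x (k + length v)]"
    using assms inf_pref_add[of k "length v + 1" x] by (simp add: occurs_at_def)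
  then have "occurs_at (morph f (inf_pref k x) @ morph f v @ f (x (k + length v)))
      (morph_inf f x) 0"
    using occurs_at_morph_inf_pref[of "k + length v + 1" x] by simp
  moreover obtain s where "f (x (k + length v)) = \<alpha> # s"
    using image_ConsE by blast
  ultimately show ?thesis
    by (simp add: image_pos_def)
qed

lemma morph_inf_image_pos: "morph_inf f x (image_pos f x k) = \<alpha>"
  using occurs_at_morph_inf[of "[]" x k] by simp

lemma occurs_at_image_block: "occurs_at (f (x k)) (morph_inf f x) (image_pos f x k)"
  using occurs_at_morph_inf[of "[x k]" x k] by simp

lemma morph_inf_in_block:
  "image_pos f x k \<le> n \<Longrightarrow> n < image_pos f x (Suc k) \<Longrightarrow>
    morph_inf f x n = f (x k) ! (n - image_pos f x k)"
  using occurs_at_image_block[of x k]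
  by (auto simp: occurs_at_def image_pos_Suc dest: arg_cong[of _ _ "\<lambda>l. l ! (n - image_pos f x k)"])

lemma image_pos_block_exists: "\<exists>k. image_pos f x k \<le> n \<and> n < image_pos f x (Suc k)"
proof (induction n)
  case 0
  show ?case by (intro exI[of _ 0]) (simp add: image_pos_Suc image_not_Nil)
next
  case (Suc n)
  then obtain k where k: "image_pos f x k \<le> n" "n < image_pos f x (Suc k)" by blast
  show ?case
  proof (cases "Suc n < image_pos f x (Suc k)")
    case True
    with k show ?thesis by (intro exI[of _ k]) simp
  next
    case False
    with k have "Suc n = image_pos f x (Suc k)" by simp
    then show ?thesis
      by (intro exI[of _ "Suc k"]) (simp add: image_pos_Suc[of f x "Suc k"] image_not_Nil)
  qed
qed

lemma morph_inf_eq_first_iff: "morph_inf f x n = \<alpha> \<longleftrightarrow> (\<exists>k. n = image_pos f x k)"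
proof
  assume n: "morph_inf f x n = \<alpha>"
  obtain k where k: "image_pos f x k \<le> n" "n < image_pos f x (Suc k)"
    using image_pos_block_exists by blast
  obtain s where s: "f (x k) = \<alpha> # s" "\<alpha> \<notin> set s"
    using image_ConsE by blast
  show "\<exists>k. n = image_pos f x k"
  proof (rule ccontr)
    assume "\<nexists>k. n = image_pos f x k"
    then have "n \<noteq> image_pos f x k" by blast
    with k have j: "0 < n - image_pos f x k" "n - image_pos f x k - 1 < length s"
      by (auto simp: image_pos_Suc s)
    have "morph_inf f x n = s ! (n - image_pos f x k - 1)"
      using morph_inf_in_block[OF k] j(1) s(1) by (simp add: nth_Cons')
    with n j(2) s(2) show False by (metis nth_mem)
  qed
qed (auto simp: morph_inf_image_pos)

lemma morph_inf_before_image_pos: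
  assumes "image_pos f x (Suc k) = Suc n"
  shows "morph_inf f x n = x k"
proof -
  have len: "0 < length (f (x k))" "image_pos f x k + length (f (x k)) = Suc n"
    using image_not_Nil assms by (simp_all add: image_pos_Suc)
  then have "image_pos f x k \<le> n" "n < image_pos f x (Suc k)"
    using assms by linarith+
  then have "morph_inf f x n = f (x k) ! (n - image_pos f x k)"
    by (rule morph_inf_in_block)
  also have "n - image_pos f x k = length (f (x k)) - 1"
    using len by linarith
  finally have "morph_inf f x n = f (x k) ! (length (f (x k)) - 1)" .
  then show ?thesis
    using last_image[of "x k"] image_not_Nil[of "x k"] by (simp add: last_conv_nth)
qed

lemma range_morph_inf: "range (morph_inf f x) = alph_img f (range x)"
proof
  show "range (morph_inf f x) \<subseteq> alph_img f (range x)"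
  proof
    fix y
    assume "y \<in> range (morph_inf f x)"
    then obtain n where y: "y = morph_inf f x n" by blast
    obtain k where k: "image_pos f x k \<le> n" "n < image_pos f x (Suc k)"
      using image_pos_block_exists by blast
    then have "y = f (x k) ! (n - image_pos f x k)" "n - image_pos f x k < length (f (x k))"
      using y morph_inf_in_block by (auto simp: image_pos_Suc)
    then show "y \<in> alph_img f (range x)"
      unfolding alph_img_def by (metis UN_I nth_mem rangeI)
  qed
next
  show "alph_img f (range x) \<subseteq> range (morph_inf f x)"
    unfolding alph_img_def
    using set_subset_range_if_occurs_at[OF occurs_at_image_block] by blast
qed

text \<open>Desubstitution: \<open>\<alpha> # z\<close> is the part of \<open>u\<close> from its last \<open>\<alpha>\<close> on, and it lies
  in the image of the letter of \<open>x\<close> that follows the occurrence of \<open>v\<close>.\<close>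
lemma occurs_at_morph_inf_desubst:
  assumes occ: "occurs_at (u @ [e]) (morph_inf f x) (image_pos f x k)" and "u \<noteq> []"
  obtains v z where "u = morph f v @ \<alpha> # z" "\<alpha> \<notin> set z" "occurs_at v x k"
    "\<alpha> # z @ [e] \<in> pref (f (x (k + length v)) @ [\<alpha>])"
proof -
  let ?W = "morph_inf f x" and ?p = "image_pos f x"
  obtain K where K: "?p K \<le> ?p k + length u - 1" "?p k + length u - 1 < ?p (Suc K)"
    using image_pos_block_exists by blast
  moreover have lu: "0 < length u" using \<open>u \<noteq> []\<close> by simp
  ultimately have "?p k < ?p (Suc K)" by linarith
  then have "k \<le> K"
    using strict_mono_image_pos by (simp add: strict_mono_less)
  define v where "v = map x [k..<K]"
  have v: "occurs_at v x k" "k + length v = K"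
    using \<open>k \<le> K\<close> by (simp_all add: v_def occurs_at_map_upt)
  have pK: "?p K = ?p k + length (morph f v)"
    using image_pos_add[OF v(1)] v(2) by simp
  have "morph f v \<in> pref u"
  proof (rule occurs_at_same_pos_pref)
    show "occurs_at (morph f v) ?W (?p k)" using occurs_at_morph_inf[OF v(1)] by simp
    show "occurs_at u ?W (?p k)" using occ by simp
    show "length (morph f v) \<le> length u" using K(1) pK by linarith
  qed
  then obtain z0 where u: "u = morph f v @ z0" by (auto simp: pref_def)
  have z0: "occurs_at (z0 @ [e]) ?W (?p K)"
    using occ u pK by simp
  have block: "occurs_at (f (x K) @ [\<alpha>]) ?W (?p K)"
    using occurs_at_morph_inf[of "[x K]" x K] by simp
  have "length u = length (morph f v) + length z0"
    using u by simp
  then have "0 < length z0" "length z0 \<le> length (f (x K))"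
    using K[unfolded image_pos_Suc] pK lu by linarith+
  then have "z0 @ [e] \<in> pref (f (x K) @ [\<alpha>])" "z0 \<in> pref (f (x K))"
    using z0 block by (auto intro: occurs_at_same_pos_pref)
  moreover obtain s where s: "f (x K) = \<alpha> # s" "\<alpha> \<notin> set s"
    using image_ConsE by blast
  ultimately obtain z where "z0 = \<alpha> # z" "\<alpha> \<notin> set z"
    using \<open>0 < length z0\<close> by (cases z0) (auto simp: pref_def)
  with that u v z0 \<open>z0 @ [e] \<in> pref (f (x K) @ [\<alpha>])\<close> show thesis by simp
qed

end

section \<open>Fragilities of images\<close>

lemma is_fragility_iff_occurs_at:
  "is_fragility u a b c \<beta> \<gamma> x \<longleftrightarrow>
     a \<noteq> b \<and> a \<noteq> c \<and> b \<noteq> c \<and> \<beta> \<noteq> \<gamma> \<and> occurs_at (u @ [a]) x 0 \<and>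
     (\<exists>i. occurs_at (\<beta> # u @ [b]) x i) \<and> (\<exists>i. occurs_at (\<gamma> # u @ [c]) x i)"
  unfolding is_fragility_def is_prefix_inf_iff_occurs_at is_factor_inf_iff_occurs_at ..

lemma is_fragility_range:
  assumes "is_fragility u a b c \<beta> \<gamma> x"
  shows "a \<in> range x \<and> b \<in> range x \<and> c \<in> range x \<and> \<beta> \<in> range x \<and> \<gamma> \<in> range x"
  using assms set_subset_range_if_occurs_at
  unfolding is_fragility_iff_occurs_at by (metis in_mono set_append list.set_intros Un_iff)

context bLSP_morphism
begin

lemma two_letter_factor_iff:
  assumes "b \<noteq> \<alpha>"
  shows "[\<beta>, b] \<in> Fact (f ` range x) \<longleftrightarrow> (\<exists>i. occurs_at [\<beta>, b] (morph_inf f x) i)"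
proof
  assume "[\<beta>, b] \<in> Fact (f ` range x)"
  then obtain k p s where "f (x k) = p @ [\<beta>, b] @ s"
    by (auto simp: Fact_def)
  with occurs_at_image_block[of x k] show "\<exists>i. occurs_at [\<beta>, b] (morph_inf f x) i"
    by auto
next
  assume "\<exists>i. occurs_at [\<beta>, b] (morph_inf f x) i"
  then obtain i where i: "morph_inf f x i = \<beta>" "morph_inf f x (Suc i) = b"
    by auto
  obtain K where K: "image_pos f x K \<le> Suc i" "Suc i < image_pos f x (Suc K)"
    using image_pos_block_exists by blast
  moreover have "image_pos f x K \<noteq> Suc i"
    using morph_inf_image_pos[of x K] i(2) assms by auto
  ultimately have "image_pos f x K \<le> i" by simp
  define j where "j = i - image_pos f x K"
  have j: "Suc j < length (f (x K))"
    using K \<open>image_pos f x K \<le> i\<close> by (simp add: j_def image_pos_Suc)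
  have "f (x K) ! j = \<beta>" "f (x K) ! Suc j = b"
    using i K \<open>image_pos f x K \<le> i\<close> morph_inf_in_block[of x K]
    by (simp_all add: j_def Suc_diff_le)
  with j have "f (x K) = take j (f (x K)) @ [\<beta>, b] @ drop (Suc (Suc j)) (f (x K))"
    by (metis Cons_nth_drop_Suc Suc_lessD append_Cons append_Nil append_take_drop_id)
  then show "[\<beta>, b] \<in> Fact (f ` range x)"
    unfolding Fact_def by blast
qed

lemma is_fragility_Nil_morph_inf_iff:
  "is_fragility [] a b c \<beta> \<gamma> (morph_inf f x) \<longleftrightarrow>
     a = \<alpha> \<and> [\<beta>, b] \<in> Fact (f ` range x) \<and> [\<gamma>, c] \<in> Fact (f ` range x) \<and>
     a \<noteq> b \<and> a \<noteq> c \<and> b \<noteq> c \<and> \<beta> \<noteq> \<gamma>"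
  using morph_inf_image_pos[of x 0] two_letter_factor_iff[of b \<beta> x] two_letter_factor_iff[of c \<gamma> x]
  by (auto simp: is_fragility_iff_occurs_at)

lemma is_fragility_morph_inf:
  assumes fr: "is_fragility u a' b' c' \<beta> \<gamma> x"
    and pref: "z @ [a] \<in> pref (f a' @ [\<alpha>])" "z @ [b] \<in> pref (f b' @ [\<alpha>])"
      "z @ [c] \<in> pref (f c' @ [\<alpha>])"
    and "a \<noteq> b" "a \<noteq> c" "b \<noteq> c"
  shows "is_fragility (morph f u @ z) a b c \<beta> \<gamma> (morph_inf f x)"
proof -
  have factor: "\<exists>j. occurs_at (\<delta> # (morph f u @ z) @ [d]) (morph_inf f x) j"
    if "occurs_at (\<delta> # u @ [d']) x i" "z @ [d] \<in> pref (f d' @ [\<alpha>])" for \<delta> d' d i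
  proof -
    obtain r where r: "f \<delta> = r @ [\<delta>]"
      using last_image[of \<delta>] image_not_Nil[of \<delta>] by (metis append_butlast_last_id)
    have "occurs_at (r @ \<delta> # morph f u @ f d' @ [\<alpha>]) (morph_inf f x) (image_pos f x i)"
      using occurs_at_morph_inf[OF that(1)] r by simp
    then have "occurs_at (\<delta> # morph f u @ f d' @ [\<alpha>]) (morph_inf f x) (image_pos f x i + length r)"
      by simp
    moreover have "\<delta> # (morph f u @ z) @ [d] \<in> pref (\<delta> # morph f u @ f d' @ [\<alpha>])"
      using that(2) by (auto simp: pref_def)
    ultimately show ?thesis by (blast intro: occurs_at_pref)
  qed
  have "occurs_at (morph f u @ f a' @ [\<alpha>]) (morph_inf f x) 0"
    using fr occurs_at_morph_inf[of "u @ [a']" x 0] by (simp add: is_fragility_iff_occurs_at)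
  moreover have "(morph f u @ z) @ [a] \<in> pref (morph f u @ f a' @ [\<alpha>])"
    using pref(1) by (auto simp: pref_def)
  ultimately have "occurs_at ((morph f u @ z) @ [a]) (morph_inf f x) 0"
    by (rule occurs_at_pref)
  with fr factor pref(2,3) assms(5-7) show ?thesis
    unfolding is_fragility_iff_occurs_at by blast
qed

lemma occurs_at_morph_inf_after_letter:
  assumes "occurs_at (\<delta> # u @ [d]) (morph_inf f x) i" "u \<noteq> []" "hd u = \<alpha>"
  obtains k where "occurs_at (u @ [d]) (morph_inf f x) (image_pos f x (Suc k))" "x k = \<delta>"
proof -
  from assms(1) have occ: "morph_inf f x i = \<delta>" "occurs_at (u @ [d]) (morph_inf f x) (Suc i)"
    by simp_all
  with assms(2,3) have "morph_inf f x (Suc i) = \<alpha>"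
    by (cases u) auto
  then obtain k' where k': "Suc i = image_pos f x k'"
    by (auto simp: morph_inf_eq_first_iff)
  then obtain k where "k' = Suc k"
    by (cases k') auto
  with k' occ morph_inf_before_image_pos[of x k i] show thesis
    by (intro that[of k]) simp_all
qed

lemma is_fragility_morph_inf_desubst:
  assumes fr: "is_fragility u a b c \<beta> \<gamma> (morph_inf f x)" and "u \<noteq> []"
  shows "\<exists>a' b' c' z. (a', b', c', \<beta>, \<gamma>) \<in> Frag x \<and> z @ [a] \<in> pref (f a' @ [\<alpha>]) \<and>
    z @ [b] \<in> pref (f b' @ [\<alpha>]) \<and> z @ [c] \<in> pref (f c' @ [\<alpha>])"
proof -
  from fr obtain i1 i2 where
    occ: "occurs_at (u @ [a]) (morph_inf f x) (image_pos f x 0)"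
      "occurs_at (\<beta> # u @ [b]) (morph_inf f x) i1" "occurs_at (\<gamma> # u @ [c]) (morph_inf f x) i2"
    and dist: "a \<noteq> b" "a \<noteq> c" "b \<noteq> c" "\<beta> \<noteq> \<gamma>"
    by (auto simp: is_fragility_iff_occurs_at)
  have "hd u = \<alpha>"
    using occ(1) morph_inf_image_pos[of x 0] \<open>u \<noteq> []\<close> by (cases u) auto
  obtain k1 k2 where
    occ': "occurs_at (u @ [b]) (morph_inf f x) (image_pos f x (Suc k1))"
      "occurs_at (u @ [c]) (morph_inf f x) (image_pos f x (Suc k2))"
    and letters: "x k1 = \<beta>" "x k2 = \<gamma>"
    using occurs_at_morph_inf_after_letter[OF occ(2) \<open>u \<noteq> []\<close> \<open>hd u = \<alpha>\<close>]
      occurs_at_morph_inf_after_letter[OF occ(3) \<open>u \<noteq> []\<close> \<open>hd u = \<alpha>\<close>] by metis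
  obtain v z where u: "u = morph f v @ \<alpha> # z" "\<alpha> \<notin> set z" and v: "occurs_at v x 0"
    and pa: "\<alpha> # z @ [a] \<in> pref (f (x (length v)) @ [\<alpha>])"
    using occurs_at_morph_inf_desubst[OF occ(1) \<open>u \<noteq> []\<close>] by auto
  text \<open>The decomposition of \<open>u\<close> is determined by its last \<open>\<alpha>\<close>, hence shared by the
    three occurrences.\<close>
  have same_decomposition: "v' = v \<and> z' = z"
    if "u = morph f v' @ \<alpha> # z'" "\<alpha> \<notin> set z'" for v' z'
    using last_occurrence_unique[of "morph f v'" \<alpha> z' "morph f v" z] that u inj_morph
    by (auto dest: injD)
  obtain pb: "\<alpha> # z @ [b] \<in> pref (f (x (Suc k1 + length v)) @ [\<alpha>])"
    and v1: "occurs_at v x (Suc k1)"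
    using occurs_at_morph_inf_desubst[OF occ'(1) \<open>u \<noteq> []\<close>] same_decomposition by metis
  obtain pc: "\<alpha> # z @ [c] \<in> pref (f (x (Suc k2 + length v)) @ [\<alpha>])"
    and v2: "occurs_at v x (Suc k2)"
    using occurs_at_morph_inf_desubst[OF occ'(2) \<open>u \<noteq> []\<close>] same_decomposition by metis
  have "is_fragility v (x (length v)) (x (Suc k1 + length v)) (x (Suc k2 + length v)) \<beta> \<gamma> x"
    unfolding is_fragility_iff_occurs_at
  proof (intro conjI exI)
    show "x (length v) \<noteq> x (Suc k1 + length v)"
      using pa pb dist(1) pref_snoc_unique[of "\<alpha> # z"] by (metis append_Cons)
    show "x (length v) \<noteq> x (Suc k2 + length v)"
      using pa pc dist(2) pref_snoc_unique[of "\<alpha> # z"] by (metis append_Cons)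
    show "x (Suc k1 + length v) \<noteq> x (Suc k2 + length v)"
      using pb pc dist(3) pref_snoc_unique[of "\<alpha> # z"] by (metis append_Cons)
    show "occurs_at (\<beta> # v @ [x (Suc k1 + length v)]) x k1"
      using v1 letters(1) by simp
    show "occurs_at (\<gamma> # v @ [x (Suc k2 + length v)]) x k2"
      using v2 letters(2) by simp
  qed (use v dist(4) in simp_all)
  with pa pb pc show ?thesis
    unfolding Frag_def by (metis (mono_tags, lifting) append_Cons case_prodI mem_Collect_eq)
qed

lemma mem_Frag_morph_inf_iff:
  "(a, b, c, \<beta>, \<gamma>) \<in> Frag (morph_inf f x) \<longleftrightarrow>
      a \<in> range (morph_inf f x) \<and> b \<in> range (morph_inf f x) \<and> c \<in> range (morph_inf f x) \<and>
      \<beta> \<in> range (morph_inf f x) \<and> \<gamma> \<in> range (morph_inf f x) \<and>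
      a \<noteq> b \<and> a \<noteq> c \<and> b \<noteq> c \<and> \<beta> \<noteq> \<gamma> \<and>
      ((a = \<alpha> \<and> [\<beta>, b] \<in> Fact (f ` range x) \<and> [\<gamma>, c] \<in> Fact (f ` range x)) \<or>
       (\<exists>a' b' c' z. (a', b', c', \<beta>, \<gamma>) \<in> Frag x \<and>
          z @ [a] \<in> pref (f a' @ [\<alpha>]) \<and> z @ [b] \<in> pref (f b' @ [\<alpha>]) \<and>
          z @ [c] \<in> pref (f c' @ [\<alpha>])))"
  (is "_ \<longleftrightarrow> ?rhs")
proof
  assume "(a, b, c, \<beta>, \<gamma>) \<in> Frag (morph_inf f x)"
  then obtain u where fr: "is_fragility u a b c \<beta> \<gamma> (morph_inf f x)"
    by (auto simp: Frag_def)
  then show ?rhs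
    using is_fragility_range[OF fr] is_fragility_Nil_morph_inf_iff[of a b c \<beta> \<gamma> x]
      is_fragility_morph_inf_desubst[OF fr]
    by (cases "u = []") (auto simp: is_fragility_iff_occurs_at)
next
  assume ?rhs
  then show "(a, b, c, \<beta>, \<gamma>) \<in> Frag (morph_inf f x)"
    using is_fragility_Nil_morph_inf_iff[of a b c \<beta> \<gamma> x] is_fragility_morph_inf
    unfolding Frag_def by blast
qed

end

theorem lemma5:
  fixes f g :: "'a::finite \<Rightarrow> 'a list"
    and w w' w'' :: "nat \<Rightarrow> 'a"
  assumes "LSP w" and "LSP w'"
    and "is_bLSP f" and "w = morph_inf f w'"
    and "is_bLSP g" and "w' = morph_inf g w''"
  shows "transition (range w, f, Frag w) f (range w', g, Frag w')"
proof -
  obtain \<alpha> where "bLSP_with f \<alpha>"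
    using \<open>is_bLSP f\<close> unfolding is_bLSP_def by blast
  then interpret bLSP_morphism f \<alpha>
    by unfold_locales
  have not_breaking: "\<forall>(a, b, c, \<beta>, \<gamma>) \<in> Frag w'. \<not> LSP_breaking f a b c"
  proof clarify
    fix a b c \<beta> \<gamma>
    assume "(a, b, c, \<beta>, \<gamma>) \<in> Frag w'" "LSP_breaking f a b c"
    then have "fragile a b c w'" "\<not> LSP (morph_inf f w') \<or> \<not> fragile a b c w'"
      unfolding Frag_def fragile_def is_fragility_def LSP_breaking_def
      using assms(2) by blast+
    with assms(1,4) show False by simp
  qed
  show ?thesis
    unfolding transition_def is_state_def st_bLSP_def st_alph_def st_set_def fst_conv snd_conv
    using assms(3,5) not_breaking
    by (simp add: assms(4) range_morph_inf first_eq set_eq_iff split_paired_All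
        mem_Frag_morph_inf_iff)
qed

end
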